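(* $\mathtt{RealTime_{CA}}\subseteq\mathtt{pred}$-$\mathtt{ESO}$-$\mathtt{HORN}$: for every cellular automaton $\mathcal A$ with parallel input, neighborhood $\{-1,0,1\}$ and first cell as output cell, there is a predecessor Horn formula $\Phi$ such that for all $w\in\Sigma^+$, $\mathcal A$ accepts $w$ in real time if and only if $\langle w\rangle\models\Phi$.
   Context: Fix a finite alphabet $\Sigma$. A nonempty word $w=w_1\cdots w_n$ is represented by the structure $\langle w\rangle=([1,n];(Q_s)_{s\in\Sigma},\mathtt{min},\mathtt{max},\mathtt{suc},\mathtt{pred})$ with $Q_s(i)\iff w_i=s$, $\mathtt{min}(i)\iff i=1$, $\mathtt{max}(i)\iff i=n$, $\mathtt{suc}(i)=\min(i+1,n)$, $\mathtt{pred}(i)=\max(i-1,1)$; $x-k$ denotes $\mathtt{pred}^k(x)$. A predecessor Horn formula is $\Phi=\exists\mathbf{R}\forall x\forall y\,\psi(x,y)$, $\mathbf{R}$ a finite set of binary relation symbols, $\psi$ a conjunction of Horn clauses in $x,y$, each of the form $\delta_1\wedge\cdots\wedge\delta_r\to\delta_0$ with $\delta_0$ an atom $R(x,y)$ ($R\in\mathbf{R}$) or $\bot$, each hypothesis being one of: $Q_s(x-a)$, $Q_s(y-a)$ ($s\in\Sigma$, $a\ge0$); $U(x-a)$, $\neg U(x-a)$, $U(y-a)$, $\neg U(y-a)$ ($U\in\{\mathtt{min},\mathtt{max}\}$, $a\ge0$); $S(x-a,y-b)$ or $S(y-b,x-a)$ ($S\in\mathbf{R}$, $a,b\ge0$).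 $\mathtt{pred}$-$\mathtt{ESO}$-$\mathtt{HORN}$ is the class of languages $\{w\in\Sigma^+:\langle w\rangle\models\Phi\}$. A cellular automaton is $(Q,\Sigma,Q_{accept},\mathcal N,\delta)$ with finite $Q\supseteq\Sigma$, $Q_{accept}\subseteq Q$, finite ordered neighborhood $\mathcal N\subseteq\mathbb Z$, $\delta:Q^{|\mathcal N|}\to Q$. On input $w$ of length $n$ it uses cells $1,\dots,n$, cells outside being permanently in a state $\sharp$; with parallel input $\langle c,1\rangle=w_c$ and $\langle c,t\rangle=\delta(\langle c+v,t-1\rangle:v\in\mathcal N)$ for $t>1$. With $\mathcal N=\{-1,0,1\}$ and output cell $1$, $\mathcal A$ accepts $w$ in real time iff $\langle 1,n\rangle\in Q_{accept}$; $\mathtt{RealTime_{CA}}$ is the class of languages so accepted. *)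

theory Defs
  imports Main
begin

text \<open>The alphabet Sigma is a finite type 'a; the state set Q is a finite type 'q.
  Q contains Sigma via the injective embedding inp, and the border state sharp is
  not an input letter. The local rule acts on (left, self, right).\<close>

record ('a, 'q) ca =
  inp :: "'a \<Rightarrow> 'q"
  sharp :: "'q"
  accept :: "'q set"
  delta :: "'q \<Rightarrow> 'q \<Rightarrow> 'q \<Rightarrow> 'q"

definition ca_wf :: "('a, 'q) ca \<Rightarrow> bool" where
  "ca_wf A \<longleftrightarrow> inj (inp A) \<and> sharp A \<notin> range (inp A)"

text \<open>ca_state A w t c is the state of cell c at time t+1 (paper notation <c, t+1>).\<close>
fun ca_state :: "('a, 'q) ca \<Rightarrow> 'a list \<Rightarrow> nat \<Rightarrow> int \<Rightarrow> 'q" where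
  "ca_state A w 0 c =
     (if 1 \<le> c \<and> c \<le> int (length w) then inp A (w ! nat (c - 1)) else sharp A)"
| "ca_state A w (Suc t) c =
     (if 1 \<le> c \<and> c \<le> int (length w)
      then delta A (ca_state A w t (c - 1)) (ca_state A w t c) (ca_state A w t (c + 1))
      else sharp A)"

text \<open>Real-time acceptance: state of cell 1 at time n = |w| lies in Q_accept.\<close>
definition rt_accepts :: "('a, 'q) ca \<Rightarrow> 'a list \<Rightarrow> bool" where
  "rt_accepts A w \<longleftrightarrow> ca_state A w (length w - 1) 1 \<in> accept A"

datatype fvar = VX | VY

text \<open>Relation symbols are natural numbers.
  HQ v s a       : Q_s(v - a)
  HMin v a b     : min(v - a) if b, else \<not>min(v - a)
  HMax v a b     : max(v - a) if b, else \<not>max(v - a)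
  HRelXY S a b   : S(x - a, y - b)
  HRelYX S b a   : S(y - b, x - a)\<close>
datatype 'a hyp =
    HQ fvar 'a nat
  | HMin fvar nat bool
  | HMax fvar nat bool
  | HRelXY nat nat nat
  | HRelYX nat nat nat

datatype concl = CRel nat | CBot

type_synonym 'a clause = "'a hyp list \<times> concl"
type_synonym 'a horn_formula = "'a clause list"

text \<open>Structure <w>: domain [1,n]; pred^a(i) = max(i - a, 1).\<close>
definition predk :: "nat \<Rightarrow> nat \<Rightarrow> nat" where
  "predk a i = max (i - a) 1"

definition vval :: "fvar \<Rightarrow> nat \<Rightarrow> nat \<Rightarrow> nat" where
  "vval v x y = (case v of VX \<Rightarrow> x | VY \<Rightarrow> y)"

fun hyp_holds :: "'a list \<Rightarrow> (nat \<Rightarrow> nat \<Rightarrow> nat \<Rightarrow> bool) \<Rightarrow> nat \<Rightarrow> nat \<Rightarrow> 'a hyp \<Rightarrow> bool" where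
  "hyp_holds w I x y (HQ v s a) = (w ! (predk a (vval v x y) - 1) = s)"
| "hyp_holds w I x y (HMin v a b) = ((predk a (vval v x y) = 1) = b)"
| "hyp_holds w I x y (HMax v a b) = ((predk a (vval v x y) = length w) = b)"
| "hyp_holds w I x y (HRelXY S a b) = I S (predk a x) (predk b y)"
| "hyp_holds w I x y (HRelYX S b a) = I S (predk b y) (predk a x)"

fun concl_holds :: "(nat \<Rightarrow> nat \<Rightarrow> nat \<Rightarrow> bool) \<Rightarrow> nat \<Rightarrow> nat \<Rightarrow> concl \<Rightarrow> bool" where
  "concl_holds I x y (CRel R) = I R x y"
| "concl_holds I x y CBot = False"

text \<open><w> |= exists R forall x forall y psi(x,y); the relations I are binary relations
  over the domain (values outside [1,n] are never inspected).\<close>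
definition models :: "'a list \<Rightarrow> 'a horn_formula \<Rightarrow> bool" where
  "models w \<Phi> \<longleftrightarrow> (\<exists>I. \<forall>x y. 1 \<le> x \<and> x \<le> length w \<and> 1 \<le> y \<and> y \<le> length w \<longrightarrow>
      (\<forall>cl \<in> set \<Phi>. (\<forall>h \<in> set (fst cl). hyp_holds w I x y h) \<longrightarrow> concl_holds I x y (snd cl)))"

end

theory Submission
  imports Defs
begin

text \<open>Index the space-time diagram of the automaton by \<open>(x, y)\<close> with time \<open>y\<close> and cell
  \<open>x - y + 1\<close>. The real-time output \<open>\<langle>1, n\<rangle>\<close> then sits at \<open>(n, n)\<close>, its light cone is
  \<open>y \<le> x \<le> n\<close>, and the three cells feeding \<open>(x, y)\<close> are \<open>(x - 2, y - 1)\<close>,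
  \<open>(x - 1, y - 1)\<close> and \<open>(x, y - 1)\<close>, all reachable by \<open>pred\<close>. With one binary relation
  per state, and \<open>x = y\<close>, \<open>y < x\<close> defined inductively along the diagonal, Horn clauses
  replay the local rule: every model contains the true diagram, and the diagram itself is a
  model. A clause forbidding a rejecting state at \<open>(n, n)\<close> therefore leaves the formula
  satisfiable exactly when the automaton accepts.\<close>

lemma ca_state_left_border [simp]: "ca_state A w t 0 = sharp A"
  by (cases t) simp_all

definition diag_state :: "('a, 'q) ca \<Rightarrow> 'a list \<Rightarrow> nat \<Rightarrow> nat \<Rightarrow> 'q" where
  "diag_state A w x y = ca_state A w (y - 1) (int x - int y + 1)"

lemma diag_state_first_row:
  "1 \<le> x \<Longrightarrow> x \<le> length w \<Longrightarrow> diag_state A w x 1 = inp A (w ! (x - 1))"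
  by (simp add: diag_state_def nat_diff_distrib)

lemma diag_state_step:
  assumes "2 \<le> y" "y \<le> x" "x \<le> length w"
  shows "diag_state A w x y =
    delta A (if x = y then sharp A else diag_state A w (x - 2) (y - 1))
      (diag_state A w (x - 1) (y - 1)) (diag_state A w x (y - 1))"
proof -
  obtain t where t: "y - 1 = Suc t" "y - 1 - 1 = t"
    using assms by (metis Suc_diff_Suc Suc_le_eq diff_Suc_1 one_add_one plus_1_eq_Suc)
  define c where "c = int x - int y + 1"
  have "1 \<le> c" "c \<le> int (length w)" using assms by (auto simp: c_def)
  then have "diag_state A w x y =
      delta A (ca_state A w t (c - 1)) (ca_state A w t c) (ca_state A w t (c + 1))"
    unfolding diag_state_def t(1) c_def[symmetric] by simp
  moreover have
    "ca_state A w t (c - 1) = (if x = y then sharp A else diag_state A w (x - 2) (y - 1))"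
    using assms unfolding diag_state_def t(2) by (auto simp: c_def)
  moreover have "ca_state A w t c = diag_state A w (x - 1) (y - 1)"
    "ca_state A w t (c + 1) = diag_state A w x (y - 1)"
    using assms unfolding diag_state_def t(2) by (auto simp: c_def)
  ultimately show ?thesis by simp
qed

lemma rt_accepts_iff_diag_state:
  "rt_accepts A w \<longleftrightarrow> diag_state A w (length w) (length w) \<in> accept A"
  by (simp add: rt_accepts_def diag_state_def)

definition satisfies :: "'a list \<Rightarrow> (nat \<Rightarrow> nat \<Rightarrow> nat \<Rightarrow> bool) \<Rightarrow> 'a horn_formula \<Rightarrow> bool" where
  "satisfies w I \<Phi> \<longleftrightarrow> (\<forall>x y. 1 \<le> x \<and> x \<le> length w \<and> 1 \<le> y \<and> y \<le> length w \<longrightarrow>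
      (\<forall>cl \<in> set \<Phi>. (\<forall>h \<in> set (fst cl). hyp_holds w I x y h) \<longrightarrow> concl_holds I x y (snd cl)))"

lemma models_iff_satisfies: "models w \<Phi> \<longleftrightarrow> (\<exists>I. satisfies w I \<Phi>)"
  by (simp add: models_def satisfies_def)

lemma satisfies_append [simp]:
  "satisfies w I (\<Phi> @ \<Psi>) \<longleftrightarrow> satisfies w I \<Phi> \<and> satisfies w I \<Psi>"
  unfolding satisfies_def set_append ball_Un by blast

lemma satisfies_RelD:
  assumes "satisfies w I \<Phi>" "(hs, CRel R) \<in> set \<Phi>"
    "1 \<le> x" "x \<le> length w" "1 \<le> y" "y \<le> length w" "\<forall>h\<in>set hs. hyp_holds w I x y h"
  shows "I R x y"
  using assms unfolding satisfies_def by fastforce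

lemma satisfies_BotD:
  assumes "satisfies w I \<Phi>" "(hs, CBot) \<in> set \<Phi>"
    "1 \<le> x" "x \<le> length w" "1 \<le> y" "y \<le> length w" "\<forall>h\<in>set hs. hyp_holds w I x y h"
  shows False
  using assms unfolding satisfies_def by fastforce

lemma predk_eq: "predk a x = (if a < x then x - a else 1)"
  by (simp add: predk_def)

declare vval_def [simp] predk_eq [simp]

definition order_clauses :: "'a horn_formula" where
  "order_clauses =
     [([HMin VX 0 True, HMin VY 0 True], CRel 0),
      ([HMin VX 0 False, HMin VY 0 False, HRelXY 0 1 1], CRel 0),
      ([HMin VX 0 False, HMin VY 0 True], CRel 1),
      ([HMin VY 0 False, HRelXY 1 1 1], CRel 1)]"

lemma satisfies_order_clauses:
  assumes "\<And>x y. I 0 x y \<longleftrightarrow> x = y" and "\<And>x y. I 1 x y \<longleftrightarrow> y < x"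
  shows "satisfies w I order_clauses"
  using assms by (auto simp: satisfies_def order_clauses_def)

lemma order_clauses_diagonal:
  assumes "satisfies w I order_clauses" "1 \<le> x" "x \<le> length w"
  shows "I 0 x x"
  using assms(2,3)
proof (induction x rule: nat_induct_at_least)
  case base
  then show ?case
    by (intro satisfies_RelD[OF assms(1), of "[HMin VX 0 True, HMin VY 0 True]"])
      (simp_all add: order_clauses_def)
next
  case (Suc x)
  then show ?case
    by (intro satisfies_RelD[OF assms(1), of "[HMin VX 0 False, HMin VY 0 False, HRelXY 0 1 1]"])
      (simp_all add: order_clauses_def)
qed

lemma order_clauses_below_diagonal:
  assumes "satisfies w I order_clauses" "1 \<le> y" "y < x" "x \<le> length w"
  shows "I 1 x y"
  using assms(2-4)
proof (induction y arbitrary: x rule: nat_induct_at_least)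
  case base
  then show ?case
    by (intro satisfies_RelD[OF assms(1), of "[HMin VX 0 False, HMin VY 0 True]"])
      (simp_all add: order_clauses_def)
next
  case (Suc y)
  then have "I 1 (x - 1) y" by simp
  with Suc show ?case
    by (intro satisfies_RelD[OF assms(1), of "[HMin VY 0 False, HRelXY 1 1 1]"])
      (simp_all add: order_clauses_def)
qed

locale ca_horn_encoding =
  fixes A :: "('a, 'q) ca" and letters :: "'a list" and states :: "'q list"
    and code :: "'q \<Rightarrow> nat"
  assumes letters_UNIV: "set letters = UNIV" and states_UNIV: "set states = UNIV"
    and inj_code: "inj code"
begin

text \<open>Relation symbol \<open>0\<close> stands for \<open>x = y\<close>, \<open>1\<close> for \<open>y < x\<close>, and \<open>state_rel q\<close> for
  \<open>y \<le> x \<and> diag_state A w x y = q\<close>.\<close>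

definition state_rel :: "'q \<Rightarrow> nat" where
  "state_rel q = code q + 2"

definition init_clauses :: "'a horn_formula" where
  "init_clauses = [([HMin VY 0 True, HQ VX s 0], CRel (state_rel (inp A s))). s \<leftarrow> letters]"

definition border_clauses :: "'a horn_formula" where
  "border_clauses =
     [([HMin VY 0 False, HRelXY 0 0 0, HRelXY (state_rel a) 1 1, HRelXY (state_rel b) 0 1],
       CRel (state_rel (delta A (sharp A) a b))). a \<leftarrow> states, b \<leftarrow> states]"

definition inner_clauses :: "'a horn_formula" where
  "inner_clauses =
     [([HMin VY 0 False, HRelXY 1 0 0,
        HRelXY (state_rel a) 2 1, HRelXY (state_rel b) 1 1, HRelXY (state_rel c) 0 1],
       CRel (state_rel (delta A a b c))). a \<leftarrow> states, b \<leftarrow> states, c \<leftarrow> states]"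

definition reject_clauses :: "'a horn_formula" where
  "reject_clauses =
     [([HMax VX 0 True, HMax VY 0 True, HRelXY (state_rel q) 0 0], CBot).
       q \<leftarrow> states, q \<notin> accept A]"

definition ca_formula :: "'a horn_formula" where
  "ca_formula = order_clauses @ init_clauses @ border_clauses @ inner_clauses @ reject_clauses"

definition diag_interp :: "'a list \<Rightarrow> nat \<Rightarrow> nat \<Rightarrow> nat \<Rightarrow> bool" where
  "diag_interp w R x y \<longleftrightarrow>
     R = 0 \<and> x = y \<or> R = 1 \<and> y < x \<or> y \<le> x \<and> R = state_rel (diag_state A w x y)"

lemma diag_interp_simps [simp]:
  "diag_interp w 0 x y \<longleftrightarrow> x = y"
  "diag_interp w 1 x y \<longleftrightarrow> y < x"
  "diag_interp w (state_rel q) x y \<longleftrightarrow> y \<le> x \<and> q = diag_state A w x y"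
  by (auto simp: diag_interp_def state_rel_def inj_eq inj_code)

lemma satisfies_init_clauses: "satisfies w (diag_interp w) init_clauses"
  by (auto simp: satisfies_def init_clauses_def diag_state_first_row[simplified])

lemma satisfies_border_clauses: "satisfies w (diag_interp w) border_clauses"
  by (clarsimp simp: satisfies_def border_clauses_def) (simp add: diag_state_step)

lemma satisfies_inner_clauses: "satisfies w (diag_interp w) inner_clauses"
  by (clarsimp simp: satisfies_def inner_clauses_def diag_interp_simps[simplified])
    (simp add: diag_state_step)

lemma satisfies_reject_clauses:
  "rt_accepts A w \<Longrightarrow> satisfies w (diag_interp w) reject_clauses"
  by (auto simp: satisfies_def reject_clauses_def rt_accepts_iff_diag_state)

lemma satisfies_ca_formula:
  "rt_accepts A w \<Longrightarrow> satisfies w (diag_interp w) ca_formula"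
  by (simp add: ca_formula_def satisfies_order_clauses[OF diag_interp_simps(1,2)]
      satisfies_init_clauses satisfies_border_clauses satisfies_inner_clauses
      satisfies_reject_clauses)

lemma init_clauses_rule:
  assumes "satisfies w I init_clauses" "1 \<le> x" "x \<le> length w"
  shows "I (state_rel (inp A (w ! (x - 1)))) x 1"
  using assms
  by (intro satisfies_RelD[of w I init_clauses "[HMin VY 0 True, HQ VX (w ! (x - 1)) 0]"])
    (simp_all add: init_clauses_def letters_UNIV)

lemma border_clauses_rule:
  assumes "satisfies w I border_clauses" "2 \<le> y" "y \<le> length w" "I 0 y y"
    "I (state_rel a) (y - 1) (y - 1)" "I (state_rel b) y (y - 1)"
  shows "I (state_rel (delta A (sharp A) a b)) y y"
proof -
  have "([HMin VY 0 False, HRelXY 0 0 0, HRelXY (state_rel a) 1 1, HRelXY (state_rel b) 0 1],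
      CRel (state_rel (delta A (sharp A) a b))) \<in> set border_clauses"
    by (force simp: border_clauses_def states_UNIV)
  from satisfies_RelD[OF assms(1) this] show ?thesis
    using assms(2-6) by simp
qed

lemma inner_clauses_rule:
  assumes "satisfies w I inner_clauses" "2 \<le> y" "y < x" "x \<le> length w" "I 1 x y"
    "I (state_rel a) (x - 2) (y - 1)" "I (state_rel b) (x - 1) (y - 1)"
    "I (state_rel c) x (y - 1)"
  shows "I (state_rel (delta A a b c)) x y"
proof -
  have "([HMin VY 0 False, HRelXY 1 0 0,
        HRelXY (state_rel a) 2 1, HRelXY (state_rel b) 1 1, HRelXY (state_rel c) 0 1],
      CRel (state_rel (delta A a b c))) \<in> set inner_clauses"
    by (force simp: inner_clauses_def states_UNIV)
  from satisfies_RelD[OF assms(1) this] show ?thesis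
    using assms(2-8) by simp
qed

lemma reject_clauses_rule:
  assumes "satisfies w I reject_clauses" "w \<noteq> []" "I (state_rel q) (length w) (length w)"
  shows "q \<in> accept A"
proof (rule ccontr)
  assume "q \<notin> accept A"
  then have "([HMax VX 0 True, HMax VY 0 True, HRelXY (state_rel q) 0 0], CBot)
      \<in> set reject_clauses"
    by (force simp: reject_clauses_def states_UNIV)
  from satisfies_BotD[OF assms(1) this] show False
    using assms(2,3) by (simp add: Suc_le_eq)
qed

lemma ca_formula_forces_diag_state:
  assumes sat: "satisfies w I ca_formula" and "1 \<le> y" "y \<le> x" "x \<le> length w"
  shows "I (state_rel (diag_state A w x y)) x y"
  using assms(2-4)
proof (induction y arbitrary: x rule: nat_induct_at_least)
  case base
  then show ?case
    using init_clauses_rule[of w I x] diag_state_first_row[of x w A] sat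
    by (simp add: ca_formula_def)
next
  case (Suc y)
  have IH: "I (state_rel (diag_state A w x' y)) x' y" if "y \<le> x'" "x' \<le> length w" for x'
    using Suc.IH that by blast
  let ?a = "diag_state A w (x - 2) y" and ?b = "diag_state A w (x - 1) y"
    and ?c = "diag_state A w x y"
  have sat_parts: "satisfies w I order_clauses" "satisfies w I border_clauses"
    "satisfies w I inner_clauses"
    using sat by (simp_all add: ca_formula_def)
  have step: "diag_state A w x (Suc y) = delta A (if x = Suc y then sharp A else ?a) ?b ?c"
    using diag_state_step[of "Suc y" x w A] Suc by simp
  show ?case
  proof (cases "x = Suc y")
    case True
    have "I (state_rel (delta A (sharp A) ?b ?c)) x (Suc y)"
      using border_clauses_rule[OF sat_parts(2), of x ?b ?c]
        order_clauses_diagonal[OF sat_parts(1), of x] IH[of "x - 1"] IH[of x]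
        Suc.prems Suc.hyps True
      by simp
    then show ?thesis using step True by simp
  next
    case False
    have "I (state_rel (delta A ?a ?b ?c)) x (Suc y)"
      using inner_clauses_rule[OF sat_parts(3), of "Suc y" x ?a ?b ?c]
        order_clauses_below_diagonal[OF sat_parts(1), of "Suc y" x]
        IH[of "x - 2"] IH[of "x - 1"] IH[of x] Suc.prems Suc.hyps False
      by simp
    then show ?thesis using step False by simp
  qed
qed

lemma ca_formula_complete:
  assumes sat: "satisfies w I ca_formula" and "w \<noteq> []"
  shows "rt_accepts A w"
proof -
  have "1 \<le> length w" using assms(2) by (simp add: Suc_le_eq)
  then have "I (state_rel (diag_state A w (length w) (length w))) (length w) (length w)"
    using ca_formula_forces_diag_state[OF sat] by blast
  moreover have "satisfies w I reject_clauses"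
    using sat by (simp add: ca_formula_def)
  ultimately show ?thesis
    using reject_clauses_rule assms(2) by (simp add: rt_accepts_iff_diag_state)
qed

lemma rt_accepts_iff_models_ca_formula:
  "w \<noteq> [] \<Longrightarrow> rt_accepts A w \<longleftrightarrow> models w ca_formula"
  unfolding models_iff_satisfies using satisfies_ca_formula ca_formula_complete by blast

end

theorem lemma3:
  fixes A :: "('a::finite, 'q::finite) ca"
  assumes "ca_wf A"
  shows "\<exists>\<Phi> :: 'a horn_formula. \<forall>w :: 'a list. w \<noteq> [] \<longrightarrow> (rt_accepts A w \<longleftrightarrow> models w \<Phi>)"
proof -
  obtain letters :: "'a list" where "set letters = UNIV"
    using finite_list[OF finite_UNIV] by blast
  moreover obtain states :: "'q list" where "set states = UNIV"
    using finite_list[OF finite_UNIV] by blast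
  moreover obtain code :: "'q \<Rightarrow> nat" where "inj code"
    using finite_imp_inj_to_nat_seg[OF finite_UNIV] by blast
  ultimately interpret ca_horn_encoding A letters states code
    by unfold_locales
  show ?thesis
    using rt_accepts_iff_models_ca_formula by blast
qed

end
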